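(* Let $G=(F\cup C,E)$ be a finite bipartite graph with $F\neq\emptyset$ and no isolated vertices. In one iteration of FacilitySelect on $G$, the expected number of edges removed is at least $\sqrt{|E|}$.
   Context: Let $G=(F\cup C,E)$ be a finite bipartite graph with parts $F$ (facilities) and $C$ (clients). The facility graph $G_F=(F,E_F)$ has an edge $\{i,i'\}$ ($i\ne i'$) iff $i$ and $i'$ have a common neighbor in $G$. Write $\deg(\cdot)$, $N(\cdot)$ for degree/neighborhood in $G$, $\deg_F(\cdot)$, $N_F(\cdot)$ for those in $G_F$. One iteration of FacilitySelect: every $i\in F$ independently draws $r_i$ uniformly from $[0,1]$; let $I=\{i\in F: r_i>\max_{i'\in N_F(i)} r_{i'}\}$ (the maximum over the empty set being $-\infty$); then all vertices of $I\cup N(I)$ are deleted from $G$ together with all their incident edges. "Clients removed" are the clients in $N(I)$; "edges removed" are the edges incident to deleted vertices. FacilitySelect repeats iterations while $F\ne\emptyset$. *)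

theory Defs
  imports "HOL-Probability.Probability"
begin

text \<open>A bipartite graph G = (F \<union> C, E) is given by facilities F :: 'f set,
 clients C :: 'c set and edges E \<subseteq> F \<times> C (pair (i,c) = edge {i,c}).\<close>

definition bip_graph :: "'f set \<Rightarrow> 'c set \<Rightarrow> ('f \<times> 'c) set \<Rightarrow> bool" where
  "bip_graph F C E \<longleftrightarrow> finite F \<and> finite C \<and> E \<subseteq> F \<times> C"

definition no_isolated :: "'f set \<Rightarrow> 'c set \<Rightarrow> ('f \<times> 'c) set \<Rightarrow> bool" where
  "no_isolated F C E \<longleftrightarrow> (\<forall>i\<in>F. \<exists>c. (i, c) \<in> E) \<and> (\<forall>c\<in>C. \<exists>i. (i, c) \<in> E)"

definition facN :: "'f set \<Rightarrow> ('f \<times> 'c) set \<Rightarrow> 'f \<Rightarrow> 'f set" where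
  "facN F E i = {i' \<in> F. i' \<noteq> i \<and> (\<exists>c. (i, c) \<in> E \<and> (i', c) \<in> E)}"

text \<open>Selected set I: r_i exceeds r_{i'} for all neighbours i' in G_F
  (i.e. r_i > max over N_F(i), the max of the empty set being -infinity).\<close>
definition selected :: "'f set \<Rightarrow> ('f \<times> 'c) set \<Rightarrow> ('f \<Rightarrow> real) \<Rightarrow> 'f set" where
  "selected F E r = {i \<in> F. \<forall>i' \<in> facN F E i. r i' < r i}"

definition clientN :: "('f \<times> 'c) set \<Rightarrow> 'f set \<Rightarrow> 'c set" where
  "clientN E S = {c. \<exists>i\<in>S. (i, c) \<in> E}"

definition removed_edges :: "'f set \<Rightarrow> ('f \<times> 'c) set \<Rightarrow> ('f \<Rightarrow> real) \<Rightarrow> ('f \<times> 'c) set" where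
  "removed_edges F E r = {(i, c) \<in> E. i \<in> selected F E r \<or> c \<in> clientN E (selected F E r)}"

definition rand_space :: "'f set \<Rightarrow> ('f \<Rightarrow> real) measure" where
  "rand_space F = PiM F (\<lambda>_. uniform_measure lborel {0..1::real})"

end

theory Submission
  imports Defs
begin

text \<open>
  For a facility i let the star of i be the set of edges (j,c) whose client c
  is a neighbour of i; these are exactly the edges at clients that are deleted when i is
  selected.  Stars of two selected facilities are disjoint (a shared client would make the two
  facilities adjacent in the facility graph, and adjacent facilities are never both selected),
  so the number of removed edges is at least the sum of the star sizes s_i over the selected
  facilities.  Facility i is selected exactly when its value r_i is the strict maximum among
  itself and its d_i = deg_F(i) neighbours, which has probability 1/(d_i+1).  By linearity of
  expectation the expected number of removed edges is at least the sum of s_i/(d_i+1).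
  Finally d_i + 1 \<le> s_i (i is not isolated), d_i + 1 \<le> |F| and |E| \<le> \<Sum> s_i, and an
  elementary inequality gives \<Sum> s_i/(d_i+1) \<ge> sqrt |E|.
\<close>

section \<open>Independent uniform random variables on the unit interval\<close>

abbreviation unif01 :: "real measure" where
  "unif01 \<equiv> uniform_measure lborel {0..1}"

lemma prob_space_unif01: "prob_space unif01"
  by (rule prob_space_uniform_measure) auto

lemma product_prob_space_unif01: "product_prob_space (\<lambda>_. unif01)"
proof -
  interpret prob_space unif01 by (rule prob_space_unif01)
  show ?thesis
    by (intro product_prob_space.intro product_sigma_finite.intro product_prob_space_axioms.intro)
       (auto simp: prob_space_unif01 sigma_finite_measure)
qed

lemma prob_space_rand_space: "prob_space (rand_space F)"
  unfolding rand_space_def by (rule prob_space_PiM) (rule prob_space_unif01)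

lemma emeasure_unif01_lessThan:
  assumes "y \<in> {0..1}"
  shows "emeasure unif01 {..<y} = ennreal y"
proof -
  have "{0..1} \<inter> {..<y} = {0..<y}" using assms by auto
  then show ?thesis using assms by (simp add: divide_ennreal_def)
qed

lemma has_integral_power_unit_interval:
  "((\<lambda>y::real. y ^ n) has_integral 1 / (real n + 1)) {0..1}"
proof -
  have antiderivative: "((\<lambda>y::real. y ^ Suc n / (real n + 1)) has_real_derivative y ^ n) (at y)"
    for y :: real
  proof -
    have "((\<lambda>y::real. y ^ Suc n / (real n + 1)) has_real_derivative
            real (Suc n) * y ^ n / (real n + 1)) (at y)"
      using DERIV_pow[of "Suc n" y] by (intro DERIV_cdivide) simp
    then show ?thesis by (simp add: add.commute)
  qed
  have "((\<lambda>y. y ^ Suc n / (real n + 1)) has_vector_derivative y ^ n) (at y within {0..1})"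
    for y :: real
    using antiderivative
    by (simp only: flip: has_real_derivative_iff_has_vector_derivative)
       (rule has_field_derivative_at_within)
  from fundamental_theorem_of_calculus[OF zero_le_one this] show ?thesis by simp
qed

lemma nn_integral_unif01_power:
  "(\<integral>\<^sup>+ y. ennreal (y ^ n) \<partial>unif01) = ennreal (1 / (real n + 1))"
proof -
  have "(\<integral>\<^sup>+ y. ennreal (y ^ n) \<partial>unif01)
      = (\<integral>\<^sup>+ y. ennreal (y ^ n) * indicator {0..1} y \<partial>lborel) / emeasure lborel {0..1::real}"
    by (rule nn_integral_uniform_measure) auto
  also have "\<dots> = ennreal (1 / (real n + 1))"
    using nn_integral_has_integral_lebesgue'[OF _ has_integral_power_unit_interval[of n]]
    by (simp add: divide_ennreal_def)
  finally show ?thesis .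
qed

lemma emeasure_PiM_unif01_below:
  assumes J: "finite J" and N: "N \<subseteq> J" and y: "y \<in> {0..1}"
  shows "emeasure (PiM J (\<lambda>_. unif01)) (PiE J (\<lambda>j. if j \<in> N then {..<y} else UNIV))
           = ennreal y ^ card N"
proof -
  interpret product_prob_space "\<lambda>_. unif01" J by (rule product_prob_space_unif01)
  have "emeasure (PiM J (\<lambda>_. unif01)) (PiE J (\<lambda>j. if j \<in> N then {..<y} else UNIV))
      = (\<Prod>j\<in>J. emeasure unif01 (if j \<in> N then {..<y} else UNIV))"
    by (rule emeasure_PiM) (auto simp: J)
  also have "\<dots> = (\<Prod>j\<in>J. if j \<in> N then ennreal y else 1)"
    using emeasure_unif01_lessThan[OF y] emeasure_space_1 by (intro prod.cong) auto
  also have "\<dots> = ennreal y ^ card N"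
    using J N by (simp add: prod.If_cases Int_absorb1)
  finally show ?thesis .
qed

text \<open>
  Proof: condition on the value y of the
  distinguished variable (Fubini) and integrate y^|N|.
\<close>
lemma emeasure_strict_max_unif01:
  assumes J: "finite J" and i: "i \<notin> J" and N: "N \<subseteq> J"
  defines "M \<equiv> PiM (insert i J) (\<lambda>_. unif01)"
  shows "emeasure M {r \<in> space M. \<forall>j\<in>N. r j < r i} = ennreal (1 / (real (card N) + 1))"
proof -
  interpret product_prob_space "\<lambda>_. unif01" "insert i J" by (rule product_prob_space_unif01)
  define A where "A = {r \<in> space M. \<forall>j\<in>N. r j < r i}"
  have finN: "finite N" using N J finite_subset by blast
  have A: "A \<in> sets M"
    unfolding A_def M_def using N finN by measurable (use N in auto)
  have slice: "(\<integral>\<^sup>+ x. indicator A (x(i := y)) \<partial>PiM J (\<lambda>_. unif01))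
      = ennreal y ^ card N" if y: "y \<in> {0..1}" for y
  proof -
    define B where "B = PiE J (\<lambda>j. if j \<in> N then {..<y} else UNIV)"
    have "(\<integral>\<^sup>+ x. indicator A (x(i := y)) \<partial>PiM J (\<lambda>_. unif01))
        = (\<integral>\<^sup>+ x. indicator B x \<partial>PiM J (\<lambda>_. unif01))"
    proof (rule nn_integral_cong)
      fix x assume "x \<in> space (PiM J (\<lambda>_. unif01))"
      then have "x(i := y) \<in> A \<longleftrightarrow> x \<in> B"
        using N i unfolding A_def B_def M_def
        by (auto simp: space_PiM PiE_def extensional_def Pi_def split: if_splits)
      then show "indicator A (x(i := y)) = indicator B x" by (simp add: indicator_def)
    qed
    also have "\<dots> = emeasure (PiM J (\<lambda>_. unif01)) B"
      by (rule nn_integral_indicator) (auto simp: B_def intro!: sets_PiM_I_finite J)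
    also have "\<dots> = ennreal y ^ card N"
      unfolding B_def by (rule emeasure_PiM_unif01_below[OF J N y])
    finally show ?thesis .
  qed
  have "emeasure M A = (\<integral>\<^sup>+ r. indicator A r \<partial>M)"
    using A by simp
  also have "\<dots> = (\<integral>\<^sup>+ y. (\<integral>\<^sup>+ x. indicator A (x(i := y)) \<partial>PiM J (\<lambda>_. unif01)) \<partial>unif01)"
    unfolding M_def by (rule product_nn_integral_insert_rev) (use J i A in \<open>auto simp: M_def\<close>)
  also have "\<dots> = (\<integral>\<^sup>+ y. ennreal (y ^ card N) \<partial>unif01)"
  proof (rule nn_integral_cong_AE)
    have "AE y in unif01. y \<in> {0..1}" by (rule AE_uniform_measureI) auto
    then show "AE y in unif01. (\<integral>\<^sup>+ x. indicator A (x(i := y)) \<partial>PiM J (\<lambda>_. unif01))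
                 = ennreal (y ^ card N)"
      by eventually_elim (simp add: slice ennreal_power)
  qed
  also have "\<dots> = ennreal (1 / (real (card N) + 1))"
    by (rule nn_integral_unif01_power)
  finally show ?thesis unfolding A_def .
qed

section \<open>Stars of facilities\<close>

text \<open>The star of facility i: all edges at clients adjacent to i.  When i is selected, its
  neighbouring clients are deleted, and with them every edge of its star.\<close>
definition star :: "('f \<times> 'c) set \<Rightarrow> 'f \<Rightarrow> ('f \<times> 'c) set" where
  "star E i = {(j, c) \<in> E. (i, c) \<in> E}"

lemma finite_star: "finite E \<Longrightarrow> finite (star E i)"
  by (rule finite_subset[of _ E]) (auto simp: star_def)

lemma card_removed_edges_le: "finite E \<Longrightarrow> card (removed_edges F E r) \<le> card E"
  by (rule card_mono) (auto simp: removed_edges_def)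

lemma star_subset_removed_edges:
  "i \<in> selected F E r \<Longrightarrow> star E i \<subseteq> removed_edges F E r"
  by (auto simp: star_def removed_edges_def clientN_def)

text \<open>Two selected facilities have disjoint stars: a common client would make them adjacent in
  the facility graph, and then each value would have to exceed the other.\<close>
lemma selected_stars_disjoint:
  assumes i: "i \<in> selected F E r" and j: "j \<in> selected F E r" and "i \<noteq> j"
  shows "star E i \<inter> star E j = {}"
proof (rule ccontr)
  assume "star E i \<inter> star E j \<noteq> {}"
  then obtain c where "(i, c) \<in> E" "(j, c) \<in> E" by (auto simp: star_def)
  then have "j \<in> facN F E i" "i \<in> facN F E j"
    using i j \<open>i \<noteq> j\<close> by (auto simp: facN_def selected_def)
  then have "r j < r i" "r i < r j"
    using i j by (auto simp: selected_def)
  then show False by simp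
qed

text \<open>Pointwise bound: the removed edges contain the disjoint union of the selected stars.\<close>
lemma sum_star_le_card_removed_edges:
  assumes F: "finite F" and E: "finite E"
  shows "(\<Sum>i\<in>selected F E r. card (star E i)) \<le> card (removed_edges F E r)"
proof -
  have "finite (selected F E r)"
    using F by (auto simp: selected_def)
  then have "(\<Sum>i\<in>selected F E r. card (star E i)) = card (\<Union>i\<in>selected F E r. star E i)"
    by (rule card_UN_disjoint[symmetric]) (auto simp: finite_star[OF E] selected_stars_disjoint)
  also have "\<dots> \<le> card (removed_edges F E r)"
  proof (rule card_mono)
    show "finite (removed_edges F E r)"
      by (rule finite_subset[OF _ E]) (auto simp: removed_edges_def)
    show "(\<Union>i\<in>selected F E r. star E i) \<subseteq> removed_edges F E r"
      by (intro UN_least star_subset_removed_edges)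
  qed
  finally show ?thesis .
qed

text \<open>A non-isolated facility i has deg_F(i) + 1 \<le> |star i|: the star meets an edge of i
  itself and an edge of every facility adjacent to i.\<close>
lemma card_facN_less_card_star:
  assumes E: "finite E" and c: "(i, c) \<in> E"
  shows "card (facN F E i) + 1 \<le> card (star E i)"
proof -
  have sub: "insert i (facN F E i) \<subseteq> fst ` star E i"
    using c by (force simp: facN_def star_def)
  have fin: "finite (fst ` star E i)"
    using finite_star[OF E] by blast
  have "card (facN F E i) + 1 = card (insert i (facN F E i))"
    using finite_subset[OF sub fin] by (simp add: facN_def)
  also have "\<dots> \<le> card (fst ` star E i)"
    using sub fin by (rule card_mono[rotated])
  also have "\<dots> \<le> card (star E i)"
    by (rule card_image_le[OF finite_star[OF E]])
  finally show ?thesis .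
qed

lemma card_facN_less_card:
  assumes F: "finite F" and i: "i \<in> F"
  shows "card (facN F E i) + 1 \<le> card F"
proof -
  have "card (facN F E i) \<le> card (F - {i})"
    using F by (intro card_mono) (auto simp: facN_def)
  moreover have "card (F - {i}) + 1 = card F"
    using card.remove[OF F i] by simp
  ultimately show ?thesis by linarith
qed

text \<open>Every edge lies in the star of its own facility.\<close>
lemma card_le_sum_card_star:
  assumes F: "finite F" and E: "finite E" and EF: "fst ` E \<subseteq> F"
  shows "card E \<le> (\<Sum>i\<in>F. card (star E i))"
proof -
  have "E \<subseteq> (\<Union>i\<in>F. star E i)"
    using EF by (force simp: star_def)
  then have "card E \<le> card (\<Union>i\<in>F. star E i)"
    using F finite_star[OF E] by (intro card_mono) auto
  also have "\<dots> \<le> (\<Sum>i\<in>F. card (star E i))"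
    by (rule card_UN_le[OF F])
  finally show ?thesis .
qed

section \<open>The expected number of removed edges\<close>

text \<open>Selection of a facility, with the quantifier bounded by the finite set F so that
  measurability is automatic.\<close>
lemma selected_iff:
  "i \<in> selected F E r \<longleftrightarrow> i \<in> F \<and> (\<forall>j\<in>F. j \<in> facN F E i \<longrightarrow> r j < r i)"
  by (auto simp: selected_def facN_def)

lemma pred_selected:
  assumes "finite F" "i \<in> F"
  shows "Measurable.pred (rand_space F) (\<lambda>r. i \<in> selected F E r)"
  unfolding selected_iff rand_space_def using assms by measurable

lemma prob_selected:
  assumes F: "finite F" and i: "i \<in> F"
  shows "measure (rand_space F) {r \<in> space (rand_space F). i \<in> selected F E r}
           = 1 / (real (card (facN F E i)) + 1)"
proof -
  define J where "J = F - {i}"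
  have M: "rand_space F = PiM (insert i J) (\<lambda>_. unif01)"
    using i by (simp add: rand_space_def J_def insert_absorb)
  have event: "{r \<in> space (rand_space F). i \<in> selected F E r}
      = {r \<in> space (rand_space F). \<forall>j\<in>facN F E i. r j < r i}"
    using i by (simp add: selected_def)
  have "emeasure (PiM (insert i J) (\<lambda>_. unif01))
          {r \<in> space (PiM (insert i J) (\<lambda>_. unif01)). \<forall>j\<in>facN F E i. r j < r i}
      = ennreal (1 / (real (card (facN F E i)) + 1))"
    by (rule emeasure_strict_max_unif01) (use F in \<open>auto simp: J_def facN_def\<close>)
  then show ?thesis
    unfolding measure_def event by (simp add: M)
qed

text \<open>The number of removed edges as a sum of indicators, which shows that it is a random
  variable.\<close>
lemma card_removed_edges_eq:
  assumes "finite E"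
  shows "real (card (removed_edges F E r))
           = (\<Sum>e\<in>E. if \<exists>i\<in>F. i \<in> selected F E r \<and> (i = fst e \<or> (i, snd e) \<in> E) then 1 else 0)"
proof -
  have "removed_edges F E r
      = {e \<in> E. \<exists>i\<in>F. i \<in> selected F E r \<and> (i = fst e \<or> (i, snd e) \<in> E)}"
    by (auto simp: removed_edges_def clientN_def selected_def)
  then show ?thesis
    using assms by (simp add: sum.inter_filter[symmetric])
qed

lemma integrable_card_removed_edges:
  assumes F: "finite F" and E: "finite E"
  shows "integrable (rand_space F) (\<lambda>r. real (card (removed_edges F E r)))"
proof -
  interpret prob_space "rand_space F" by (rule prob_space_rand_space)
  have [measurable]: "Measurable.pred (rand_space F) (\<lambda>r. i \<in> selected F E r)" if "i \<in> F" for i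
    using F that by (rule pred_selected)
  have "AE r in rand_space F. norm (real (card (removed_edges F E r))) \<le> real (card E)"
    using card_removed_edges_le[OF E] by simp
  moreover have "(\<lambda>r. real (card (removed_edges F E r))) \<in> borel_measurable (rand_space F)"
    unfolding card_removed_edges_eq[OF E] using F E by measurable
  ultimately show ?thesis by (rule integrable_const_bound)
qed

text \<open>Linearity of expectation: E[#removed] \<ge> \<Sum>_i |star i| \<cdot> P(i selected).\<close>
lemma expected_removed_edges_ge:
  assumes F: "finite F" and E: "finite E"
  shows "(\<Sum>i\<in>F. real (card (star E i)) / (real (card (facN F E i)) + 1))
           \<le> (\<integral>r. real (card (removed_edges F E r)) \<partial>rand_space F)"
proof -
  let ?M = "rand_space F"
  interpret prob_space ?M by (rule prob_space_rand_space)
  define A where "A i = {r \<in> space ?M. i \<in> selected F E r}" for i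
  have A: "A i \<in> sets ?M" if "i \<in> F" for i
    unfolding A_def using pred_selected[OF F that] by measurable
  have prob_A: "measure ?M (A i) = 1 / (real (card (facN F E i)) + 1)" if "i \<in> F" for i
    unfolding A_def by (rule prob_selected[OF F that])
  have pointwise: "(\<Sum>i\<in>F. real (card (star E i)) * indicator (A i) r)
      \<le> real (card (removed_edges F E r))" if r: "r \<in> space ?M" for r
  proof -
    have "(\<Sum>i\<in>F. real (card (star E i)) * indicator (A i) r)
        = (\<Sum>i\<in>F. if i \<in> selected F E r then real (card (star E i)) else 0)"
      using r by (intro sum.cong) (auto simp: A_def)
    also have "\<dots> = real (\<Sum>i\<in>selected F E r. card (star E i))"
    proof -
      have "{i \<in> F. i \<in> selected F E r} = selected F E r"
        by (auto simp: selected_def)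
      then show ?thesis
        using F by (simp add: sum.inter_filter[symmetric] of_nat_sum)
    qed
    also have "\<dots> \<le> real (card (removed_edges F E r))"
      by (rule of_nat_mono[OF sum_star_le_card_removed_edges[OF F E]])
    finally show ?thesis .
  qed
  have "(\<Sum>i\<in>F. real (card (star E i)) / (real (card (facN F E i)) + 1))
      = (\<Sum>i\<in>F. \<integral>r. real (card (star E i)) * indicator (A i) r \<partial>?M)"
    using A prob_A by (intro sum.cong) auto
  also have "\<dots> = (\<integral>r. (\<Sum>i\<in>F. real (card (star E i)) * indicator (A i) r) \<partial>?M)"
    using A
    by (intro Bochner_Integration.integral_sum[symmetric] integrable_mult_right
              integrable_real_indicator)
       (auto simp: less_top[symmetric])
  also have "\<dots> \<le> (\<integral>r. real (card (removed_edges F E r)) \<partial>?M)"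
    using A pointwise integrable_card_removed_edges[OF F E]
    by (intro integral_mono)
       (auto intro!: Bochner_Integration.integrable_sum integrable_mult_right
                     integrable_real_indicator simp: less_top[symmetric])
  finally show ?thesis .
qed

section \<open>An elementary inequality\<close>

text \<open>Indeed T = \<Sum> s_i/w_i is at least n (every term is at least 1) and at least
  \<Sum> s_i / n (every w_i is at most n), so T^2 \<ge> \<Sum> s_i \<ge> e.\<close>
lemma sqrt_le_sum_ratio:
  fixes s w :: "'a \<Rightarrow> real"
  assumes F: "finite F" "F \<noteq> {}"
    and w_pos: "\<And>i. i \<in> F \<Longrightarrow> 0 < w i"
    and w_le_s: "\<And>i. i \<in> F \<Longrightarrow> w i \<le> s i"
    and w_le_card: "\<And>i. i \<in> F \<Longrightarrow> w i \<le> real (card F)"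
    and e_le: "e \<le> (\<Sum>i\<in>F. s i)"
  shows "sqrt e \<le> (\<Sum>i\<in>F. s i / w i)"
proof -
  let ?n = "real (card F)" and ?S = "\<Sum>i\<in>F. s i" and ?T = "\<Sum>i\<in>F. s i / w i"
  have n_pos: "0 < ?n" using F by (simp add: card_gt_0_iff)
  have s_nonneg: "0 \<le> s i" if "i \<in> F" for i
    using w_pos[OF that] w_le_s[OF that] by linarith
  have "?n = (\<Sum>i\<in>F. 1)" by simp
  also have "\<dots> \<le> ?T"
    using w_pos w_le_s by (intro sum_mono) (simp add: le_divide_eq)
  finally have n_le_T: "?n \<le> ?T" .
  have "?S / ?n = (\<Sum>i\<in>F. s i / ?n)"
    by (simp add: sum_divide_distrib)
  also have "\<dots> \<le> ?T"
    using w_pos w_le_card s_nonneg n_pos by (intro sum_mono divide_left_mono) auto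
  finally have avg_le_T: "?S / ?n \<le> ?T" .
  have "e \<le> ?n * (?S / ?n)"
    using e_le n_pos by simp
  also have "\<dots> \<le> ?T * ?T"
    using n_le_T avg_le_T n_pos s_nonneg w_pos
    by (intro mult_mono divide_nonneg_nonneg sum_nonneg) (auto intro: less_imp_le)
  finally have "e \<le> ?T\<^sup>2" by (simp add: power2_eq_square)
  then show ?thesis
    using n_le_T n_pos by (simp add: real_le_lsqrt)
qed

theorem corollary1:
  fixes F :: "'f set" and C :: "'c set" and E :: "('f \<times> 'c) set"
  assumes "bip_graph F C E"
    and "F \<noteq> {}"
    and "no_isolated F C E"
  shows "(\<integral>r. real (card (removed_edges F E r)) \<partial>rand_space F) \<ge> sqrt (real (card E))"
proof -
  have F: "finite F" and C: "finite C" and EFC: "E \<subseteq> F \<times> C"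
    using assms(1) by (auto simp: bip_graph_def)
  have E: "finite E"
    using finite_subset[OF EFC] F C by blast
  have "sqrt (real (card E))
      \<le> (\<Sum>i\<in>F. real (card (star E i)) / (real (card (facN F E i)) + 1))"
  proof (rule sqrt_le_sum_ratio[OF F assms(2)])
    fix i assume i: "i \<in> F"
    then obtain c where "(i, c) \<in> E"
      using assms(3) by (auto simp: no_isolated_def)
    then have "card (facN F E i) + 1 \<le> card (star E i)"
      by (rule card_facN_less_card_star[OF E])
    then show "real (card (facN F E i)) + 1 \<le> real (card (star E i))"
      by simp
    have "card (facN F E i) + 1 \<le> card F"
      by (rule card_facN_less_card[OF F i])
    then show "real (card (facN F E i)) + 1 \<le> real (card F)"
      by simp
  next
    show "real (card E) \<le> (\<Sum>i\<in>F. real (card (star E i)))"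
      using card_le_sum_card_star[OF F E] EFC by (force simp flip: of_nat_sum)
  qed simp
  also have "\<dots> \<le> (\<integral>r. real (card (removed_edges F E r)) \<partial>rand_space F)"
    by (rule expected_removed_edges_ge[OF F E])
  finally show ?thesis .
qed

end
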